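(* Let $P$ be a finite lattice and $R,R'\in\mathrm{Tr}(P)$ with $\chi^R=\chi^{R'}$. Then $\chi^{R\wedge R'}=\chi^R=\chi^{R'}$, where $R\wedge R'$ is the meet (intersection of relations) in $\mathrm{Tr}(P)$.
   Context: For a finite lattice $(P,\le)$, a transfer system on $P$ is a partial order $R$ on $P$ refining $\le$ that is closed under restriction: if $x\,R\,z$ and $y\le z$ then $(x\wedge y)\,R\,y$. $\mathrm{Tr}(P)$ is the lattice of transfer systems ordered by inclusion of relations. For $R\in\mathrm{Tr}(P)$ and $x\in P$, $\chi^R(x)$ denotes the least element of $\{y\in P: y\,R\,x\}$ (which exists). *)

theory Defs
  imports Main
begin

definition transfer_system :: "('a::{finite,lattice}) rel \<Rightarrow> bool" where
  "transfer_system R \<longleftrightarrow>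
     partial_order_on UNIV R \<and>
     R \<subseteq> {(x, y). x \<le> y} \<and>
     (\<forall>x y z. (x, z) \<in> R \<longrightarrow> y \<le> z \<longrightarrow> (inf x y, y) \<in> R)"

definition chi :: "('a::{finite,lattice}) rel \<Rightarrow> 'a \<Rightarrow> 'a" where
  "chi R x = (THE y. (y, x) \<in> R \<and> (\<forall>z. (z, x) \<in> R \<longrightarrow> y \<le> z))"

end

theory Submission
  imports Defs
begin

text \<open>The element \<open>\<chi>\<^sup>R x = \<chi>\<^sup>R\<^sup>' x\<close> is related to \<open>x\<close> in both \<open>R\<close> and \<open>R'\<close>, hence in
  \<open>R \<inter> R'\<close>, and it lies below everything related to \<open>x\<close> in the smaller relation \<open>R \<inter> R'\<close>;
  so it is the least such element, without needing that \<open>R \<inter> R'\<close> is a transfer system. The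
  substance is that \<open>\<chi>\<close> is well defined: the predecessors of \<open>x\<close> in a transfer system are
  closed under meets (restriction plus transitivity), and a finite nonempty meet-closed set has a
  least element.\<close>

lemma chi_eqI:
  assumes "(y, x) \<in> R" and "\<And>z. (z, x) \<in> R \<Longrightarrow> y \<le> z"
  shows "chi R x = y"
  unfolding chi_def
  by (rule the_equality) (use assms in \<open>auto intro: order.antisym\<close>)

lemma transfer_system_inf_closed:
  assumes T: "transfer_system R" and "(y, x) \<in> R" and "(z, x) \<in> R"
  shows "(inf y z, x) \<in> R"
proof -
  have "z \<le> x" using T \<open>(z, x) \<in> R\<close> unfolding transfer_system_def by auto
  then have "(inf y z, z) \<in> R" using T \<open>(y, x) \<in> R\<close> unfolding transfer_system_def by blast
  moreover have "trans R"
    using T unfolding transfer_system_def partial_order_on_def preorder_on_def by blast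
  ultimately show ?thesis using \<open>(z, x) \<in> R\<close> by (meson transE)
qed

lemma transfer_system_least_predecessor:
  assumes T: "transfer_system R"
  obtains y where "(y, x) \<in> R" and "\<And>z. (z, x) \<in> R \<Longrightarrow> y \<le> z"
proof -
  let ?A = "{y. (y, x) \<in> R}"
  have "(x, x) \<in> R"
    using T unfolding transfer_system_def partial_order_on_def preorder_on_def refl_on_def by blast
  then have "?A \<noteq> {}" by blast
  then have "\<exists>m\<in>?A. \<forall>b\<in>?A. b \<le> m \<longrightarrow> m = b"
    by (rule finite_has_minimal[OF finite])
  then obtain m where m: "m \<in> ?A" and minimal: "\<forall>b\<in>?A. b \<le> m \<longrightarrow> m = b" ..
  have "m \<le> z" if "(z, x) \<in> R" for z
  proof -
    have "inf m z \<in> ?A" using transfer_system_inf_closed[OF T] m that by blast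
    then have "m = inf m z" using minimal by simp
    then show ?thesis by (metis inf.cobounded2)
  qed
  moreover have "(m, x) \<in> R" using m by simp
  ultimately show thesis using that by blast
qed

lemma chi_least_predecessor:
  assumes "transfer_system R"
  shows "(chi R x, x) \<in> R" and "(z, x) \<in> R \<Longrightarrow> chi R x \<le> z"
proof -
  obtain y where y: "(y, x) \<in> R" and least: "\<And>z. (z, x) \<in> R \<Longrightarrow> y \<le> z"
    using transfer_system_least_predecessor[OF assms] by blast
  have "chi R x = y" by (rule chi_eqI[OF y least])
  then show "(chi R x, x) \<in> R" and "(z, x) \<in> R \<Longrightarrow> chi R x \<le> z"
    using y least by simp_all
qed

theorem lemma2p11:
  fixes R R' :: "('a::{finite,lattice}) rel"
  assumes "transfer_system R" and "transfer_system R'"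
    and "chi R = chi R'"
  shows "chi (R \<inter> R') = chi R \<and> chi (R \<inter> R') = chi R'"
proof -
  have "chi (R \<inter> R') x = chi R x" for x
  proof (rule chi_eqI)
    show "(chi R x, x) \<in> R \<inter> R'"
      using chi_least_predecessor(1)[OF assms(1)] chi_least_predecessor(1)[OF assms(2)] assms(3)
      by simp
    show "chi R x \<le> z" if "(z, x) \<in> R \<inter> R'" for z
      using chi_least_predecessor(2)[OF assms(1)] that by blast
  qed
  with assms(3) show ?thesis by auto
qed

end
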